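(* Let $G$ be a locally finite graph with a periodic proper vertex-coloring. Then $G$ has a periodic proper vertex-coloring with at most $\Delta(G)+1$ colors.
   Context: Locally finite: every vertex has finite degree. $\Delta(G)$ is the maximum degree of $G$. A vertex-coloring is periodic if the subgroup of automorphisms of $G$ mapping each vertex to a vertex of the same color has finitely many orbits on $V(G)$ (in particular a periodic coloring uses finitely many colors). *)

theory Defs
  imports Main "HOL-Library.Extended_Nat"
begin

definition graph :: "'a set \<Rightarrow> ('a \<Rightarrow> 'a \<Rightarrow> bool) \<Rightarrow> bool" where
  "graph V E \<longleftrightarrow> (\<forall>x y. E x y \<longrightarrow> x \<in> V \<and> y \<in> V) \<and>
                  (\<forall>x y. E x y \<longrightarrow> E y x) \<and> (\<forall>x. \<not> E x x)"

definition neighbours :: "('a \<Rightarrow> 'a \<Rightarrow> bool) \<Rightarrow> 'a \<Rightarrow> 'a set" where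
  "neighbours E v = {u. E v u}"

definition locally_finite :: "'a set \<Rightarrow> ('a \<Rightarrow> 'a \<Rightarrow> bool) \<Rightarrow> bool" where
  "locally_finite V E \<longleftrightarrow> (\<forall>v\<in>V. finite (neighbours E v))"

definition degree :: "('a \<Rightarrow> 'a \<Rightarrow> bool) \<Rightarrow> 'a \<Rightarrow> nat" where
  "degree E v = card (neighbours E v)"

definition max_degree :: "'a set \<Rightarrow> ('a \<Rightarrow> 'a \<Rightarrow> bool) \<Rightarrow> enat" where
  "max_degree V E = (SUP v\<in>V. enat (degree E v))"

definition automorphism :: "'a set \<Rightarrow> ('a \<Rightarrow> 'a \<Rightarrow> bool) \<Rightarrow> ('a \<Rightarrow> 'a) \<Rightarrow> bool" where
  "automorphism V E f \<longleftrightarrow> bij_betw f V V \<and> (\<forall>x\<in>V. \<forall>y\<in>V. E x y \<longleftrightarrow> E (f x) (f y))"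

definition proper_coloring :: "'a set \<Rightarrow> ('a \<Rightarrow> 'a \<Rightarrow> bool) \<Rightarrow> ('a \<Rightarrow> 'c) \<Rightarrow> bool" where
  "proper_coloring V E c \<longleftrightarrow> (\<forall>x\<in>V. \<forall>y\<in>V. E x y \<longrightarrow> c x \<noteq> c y)"

definition color_orbit :: "'a set \<Rightarrow> ('a \<Rightarrow> 'a \<Rightarrow> bool) \<Rightarrow> ('a \<Rightarrow> 'c) \<Rightarrow> 'a \<Rightarrow> 'a set" where
  "color_orbit V E c v =
     {f v | f. automorphism V E f \<and> (\<forall>x\<in>V. c (f x) = c x)}"

definition periodic_coloring :: "'a set \<Rightarrow> ('a \<Rightarrow> 'a \<Rightarrow> bool) \<Rightarrow> ('a \<Rightarrow> 'c) \<Rightarrow> bool" where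
  "periodic_coloring V E c \<longleftrightarrow> finite (color_orbit V E c ` V)"

end

theory Submission
  imports Defs
begin

text \<open>Transport the given colouring injectively to \<open>nat\<close> and recolour greedily, one colour
class after another: each vertex receives the least colour not already taken by its neighbours
in earlier classes, so at most its degree many colours are excluded. The recolouring is defined
canonically from the graph and the old colouring, hence every automorphism preserving the old
colouring preserves the new one; the orbits of the new colouring are therefore unions of old
orbits, and there are still only finitely many of them.\<close>

lemma Least_not_in_finite_nat:
  fixes S :: "nat set"
  assumes "finite S"
  shows "(LEAST k. k \<notin> S) \<notin> S" and "(LEAST k. k \<notin> S) \<le> card S"
proof -
  have "\<exists>k\<le>card S. k \<notin> S"
  proof (rule ccontr)
    assume "\<not> (\<exists>k\<le>card S. k \<notin> S)"
    then have "{0..card S} \<subseteq> S" by auto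
    then have "card {0..card S} \<le> card S" using assms card_mono by blast
    then show False by simp
  qed
  then obtain k where "k \<le> card S" "k \<notin> S" by blast
  then show "(LEAST k. k \<notin> S) \<notin> S" and "(LEAST k. k \<notin> S) \<le> card S"
    using LeastI[of "\<lambda>k. k \<notin> S" k] Least_le[of "\<lambda>k. k \<notin> S" k] by auto
qed

lemma automorphism_id: "automorphism V E id"
  unfolding automorphism_def by auto

lemma automorphism_comp:
  assumes "automorphism V E f" "automorphism V E g"
  shows "automorphism V E (g \<circ> f)"
proof -
  have "bij_betw (g \<circ> f) V V"
    using assms bij_betw_trans unfolding automorphism_def by blast
  moreover have "E x y \<longleftrightarrow> E (g (f x)) (g (f y))" if "x \<in> V" "y \<in> V" for x y
  proof -
    have "f x \<in> V" "f y \<in> V"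
      using assms(1) that unfolding automorphism_def bij_betw_def by auto
    then show ?thesis using assms that unfolding automorphism_def by simp
  qed
  ultimately show ?thesis unfolding automorphism_def by simp
qed

lemma automorphism_neighbours:
  assumes "graph V E" "automorphism V E f" "v \<in> V"
  shows "neighbours E (f v) = f ` neighbours E v"
proof -
  have fV: "f ` V = V" and edge: "\<And>x y. x \<in> V \<Longrightarrow> y \<in> V \<Longrightarrow> E x y \<longleftrightarrow> E (f x) (f y)"
    using assms(2) unfolding automorphism_def bij_betw_def by auto
  have nV: "\<And>x y. E x y \<Longrightarrow> y \<in> V"
    using assms(1) unfolding graph_def by blast
  show ?thesis
  proof (intro equalityI subsetI)
    fix u assume "u \<in> neighbours E (f v)"
    then have "E (f v) u" by (simp add: neighbours_def)
    moreover obtain w where "w \<in> V" "u = f w"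
      using nV[OF \<open>E (f v) u\<close>] fV by blast
    ultimately show "u \<in> f ` neighbours E v"
      using edge[OF assms(3)] by (auto simp: neighbours_def)
  next
    fix u assume "u \<in> f ` neighbours E v"
    then obtain w where "E v w" "u = f w" by (auto simp: neighbours_def)
    then show "u \<in> neighbours E (f v)"
      using edge[OF assms(3) nV[OF \<open>E v w\<close>]] by (simp add: neighbours_def)
  qed
qed

lemma color_orbit_self: "v \<in> color_orbit V E c v"
  unfolding color_orbit_def by (intro CollectI exI[of _ id]) (simp add: automorphism_id)

lemma color_orbit_invariant:
  assumes "w \<in> color_orbit V E c v" "v \<in> V"
  shows "c w = c v"
  using assms unfolding color_orbit_def by auto

lemma color_orbit_subset:
  assumes inv: "\<And>f. automorphism V E f \<Longrightarrow> \<forall>x\<in>V. c (f x) = c x \<Longrightarrow> \<forall>x\<in>V. d (f x) = d x"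
    and "w \<in> color_orbit V E c v" "v \<in> V"
  shows "color_orbit V E d w \<subseteq> color_orbit V E d v"
proof
  obtain f where f: "automorphism V E f" "\<forall>x\<in>V. c (f x) = c x" and w: "w = f v"
    using assms(2) unfolding color_orbit_def by auto
  have fV: "f x \<in> V" if "x \<in> V" for x
    using f(1) that unfolding automorphism_def bij_betw_def by auto
  fix x assume "x \<in> color_orbit V E d w"
  then obtain g where g: "automorphism V E g" "\<forall>x\<in>V. d (g x) = d x" and x: "x = g w"
    unfolding color_orbit_def by auto
  have "automorphism V E (g \<circ> f)" and "\<forall>x\<in>V. d ((g \<circ> f) x) = d x"
    using automorphism_comp[OF f(1) g(1)] g(2) inv[OF f] fV by auto
  then show "x \<in> color_orbit V E d v"
    unfolding color_orbit_def x w by (intro CollectI exI[of _ "g \<circ> f"]) simp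
qed

lemma finite_image_if_factors:
  assumes "finite (g ` A)" and "\<And>x y. x \<in> A \<Longrightarrow> y \<in> A \<Longrightarrow> g x = g y \<Longrightarrow> f x = f y"
  shows "finite (f ` A)"
proof -
  let ?h = "\<lambda>S. f (SOME x. x \<in> A \<and> g x = S)"
  have "f ` A = ?h ` g ` A"
    unfolding image_image
  proof (rule image_cong[OF refl])
    fix x assume "x \<in> A"
    have "(SOME y. y \<in> A \<and> g y = g x) \<in> A \<and> g (SOME y. y \<in> A \<and> g y = g x) = g x"
      using \<open>x \<in> A\<close> by (intro someI[of "\<lambda>y. y \<in> A \<and> g y = g x" x]) simp
    then show "f x = ?h (g x)" using assms(2) \<open>x \<in> A\<close> by metis
  qed
  then show ?thesis using assms(1) by (simp only: finite_imageI)
qed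

lemma periodic_coloring_finite_range:
  assumes "periodic_coloring V E c"
  shows "finite (c ` V)"
proof (rule finite_image_if_factors)
  show "finite (color_orbit V E c ` V)"
    using assms unfolding periodic_coloring_def .
  fix v w assume "v \<in> V" "color_orbit V E c v = color_orbit V E c w"
  then show "c v = c w"
    using color_orbit_invariant color_orbit_self by metis
qed

lemma periodic_coloring_if_invariant:
  assumes "periodic_coloring V E c"
    and inv: "\<And>f. automorphism V E f \<Longrightarrow> \<forall>x\<in>V. c (f x) = c x \<Longrightarrow> \<forall>x\<in>V. d (f x) = d x"
  shows "periodic_coloring V E d"
  unfolding periodic_coloring_def
proof (rule finite_image_if_factors)
  show "finite (color_orbit V E c ` V)"
    using assms(1) unfolding periodic_coloring_def .
  fix v w assume "v \<in> V" "w \<in> V" "color_orbit V E c v = color_orbit V E c w"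
  then have "w \<in> color_orbit V E c v" "v \<in> color_orbit V E c w"
    using color_orbit_self by metis+
  then show "color_orbit V E d v = color_orbit V E d w"
    using color_orbit_subset[OF inv] \<open>v \<in> V\<close> \<open>w \<in> V\<close> by blast
qed

function greedy_recoloring :: "('a \<Rightarrow> 'a \<Rightarrow> bool) \<Rightarrow> ('a \<Rightarrow> nat) \<Rightarrow> 'a \<Rightarrow> nat" where
  "greedy_recoloring E r v =
     (LEAST k. k \<notin> greedy_recoloring E r ` {u \<in> neighbours E v. r u < r v})"
  by auto
termination by (relation "measure (\<lambda>(E, r, v). r v)") auto

declare greedy_recoloring.simps [simp del]

lemma greedy_recoloring_not_in_lower:
  assumes "finite (neighbours E v)"
  shows "greedy_recoloring E r v \<notin> greedy_recoloring E r ` {u \<in> neighbours E v. r u < r v}"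
proof -
  have "finite (greedy_recoloring E r ` {u \<in> neighbours E v. r u < r v})"
    using assms by simp
  then show ?thesis
    by (subst greedy_recoloring.simps) (rule Least_not_in_finite_nat(1))
qed

lemma greedy_recoloring_le_degree:
  assumes "finite (neighbours E v)"
  shows "greedy_recoloring E r v \<le> degree E v"
proof -
  let ?L = "{u \<in> neighbours E v. r u < r v}"
  have "finite ?L" using assms by simp
  then have "greedy_recoloring E r v \<le> card (greedy_recoloring E r ` ?L)"
    by (subst greedy_recoloring.simps) (simp add: Least_not_in_finite_nat(2))
  also have "\<dots> \<le> card ?L" using \<open>finite ?L\<close> by (rule card_image_le)
  also have "\<dots> \<le> degree E v" unfolding degree_def using assms by (intro card_mono) auto
  finally show ?thesis .
qed

lemma greedy_recoloring_proper:
  assumes "graph V E" "locally_finite V E" "proper_coloring V E r"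
  shows "proper_coloring V E (greedy_recoloring E r)"
  unfolding proper_coloring_def
proof (intro ballI impI)
  fix u v assume "u \<in> V" "v \<in> V" "E u v"
  have greedy_lower: "greedy_recoloring E r x \<noteq> greedy_recoloring E r y"
    if "x \<in> V" "E x y" "r y < r x" for x y
    using greedy_recoloring_not_in_lower[of E x r] that assms(2)
    unfolding locally_finite_def neighbours_def by blast
  have "E v u" and "r u \<noteq> r v"
    using assms(1,3) \<open>u \<in> V\<close> \<open>v \<in> V\<close> \<open>E u v\<close> unfolding graph_def proper_coloring_def by blast+
  then consider "r u < r v" | "r v < r u" by linarith
  then show "greedy_recoloring E r u \<noteq> greedy_recoloring E r v"
    using greedy_lower[OF \<open>v \<in> V\<close> \<open>E v u\<close>] greedy_lower[OF \<open>u \<in> V\<close> \<open>E u v\<close>]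
    by cases auto
qed

lemma greedy_recoloring_automorphism_invariant:
  assumes "graph V E" "automorphism V E f" "\<forall>x\<in>V. r (f x) = r x" "v \<in> V"
  shows "greedy_recoloring E r (f v) = greedy_recoloring E r v"
  using assms
proof (induction E r v rule: greedy_recoloring.induct)
  case (1 E r v)
  let ?L = "{u \<in> neighbours E v. r u < r v}"
  have nV: "neighbours E v \<subseteq> V"
    using \<open>graph V E\<close> unfolding graph_def neighbours_def by blast
  have "{u \<in> neighbours E (f v). r u < r (f v)} = f ` ?L"
    unfolding automorphism_neighbours[OF "1.prems"(1,2,4)] using "1.prems"(3,4) nV by auto
  then have "greedy_recoloring E r (f v) = (LEAST k. k \<notin> greedy_recoloring E r ` f ` ?L)"
    by (subst greedy_recoloring.simps) (simp only:)
  also have "greedy_recoloring E r ` f ` ?L = greedy_recoloring E r ` ?L"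
    unfolding image_image using "1.IH" "1.prems" nV by (intro image_cong) auto
  also have "(LEAST k. k \<notin> greedy_recoloring E r ` ?L) = greedy_recoloring E r v"
    by (rule greedy_recoloring.simps[symmetric])
  finally show ?case .
qed

lemma proper_coloring_comp_inj:
  assumes "proper_coloring V E c" "inj_on e (c ` V)"
  shows "proper_coloring V E (e \<circ> c)"
  using assms unfolding proper_coloring_def by (auto dest: inj_onD)

lemma card_range_le_max_degree_plus_one:
  fixes d :: "'a \<Rightarrow> nat"
  assumes "\<And>v. v \<in> V \<Longrightarrow> d v \<le> degree E v"
  shows "enat (card (d ` V)) \<le> max_degree V E + 1"
proof (cases "max_degree V E")
  case (enat m)
  have "d v \<le> m" if "v \<in> V" for v
  proof -
    have "enat (degree E v) \<le> max_degree V E"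
      unfolding max_degree_def using that by (rule SUP_upper)
    then show ?thesis using assms[OF that] enat by simp
  qed
  then have "card (d ` V) \<le> card {0..m}"
    by (intro card_mono) auto
  then show ?thesis using enat by (simp add: one_enat_def)
next
  case infinity
  then show ?thesis by simp
qed

theorem lemma2p7:
  fixes V :: "'a set" and E :: "'a \<Rightarrow> 'a \<Rightarrow> bool" and c :: "'a \<Rightarrow> 'c"
  assumes "graph V E"
    and "locally_finite V E"
    and "proper_coloring V E c"
    and "periodic_coloring V E c"
  shows "\<exists>d :: 'a \<Rightarrow> nat. proper_coloring V E d \<and> periodic_coloring V E d \<and>
           enat (card (d ` V)) \<le> max_degree V E + 1"
proof -
  obtain e :: "'c \<Rightarrow> nat" where "inj_on e (c ` V)"
    using finite_imp_inj_to_nat_seg[OF periodic_coloring_finite_range[OF assms(4)]] by blast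
  with assms(3) have rank_proper: "proper_coloring V E (e \<circ> c)"
    by (rule proper_coloring_comp_inj)
  define d where "d = greedy_recoloring E (e \<circ> c)"
  have "proper_coloring V E d"
    unfolding d_def using assms(1,2) rank_proper by (rule greedy_recoloring_proper)
  moreover have "periodic_coloring V E d"
    using assms(4)
  proof (rule periodic_coloring_if_invariant)
    fix f assume "automorphism V E f" "\<forall>x\<in>V. c (f x) = c x"
    then show "\<forall>x\<in>V. d (f x) = d x"
      unfolding d_def by (simp add: greedy_recoloring_automorphism_invariant[OF assms(1)])
  qed
  moreover have "enat (card (d ` V)) \<le> max_degree V E + 1"
  proof (rule card_range_le_max_degree_plus_one)
    fix v assume "v \<in> V"
    then show "d v \<le> degree E v"
      unfolding d_def using assms(2) by (simp add: locally_finite_def greedy_recoloring_le_degree)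
  qed
  ultimately show ?thesis by blast
qed

end
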